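(* Every open subspace of a $C$-selective space is $C$-selective.
   Context: All spaces are assumed $T_1$. For spaces $Y$, $X$, a map $\varphi:Y\to\mathcal P(X)\setminus\{\emptyset\}$ is lower semicontinuous (l.s.c.) if $\{y:\varphi(y)\cap U\neq\emptyset\}$ is open in $Y$ for every open $U\subseteq X$; a selection is a map $f:Y\to X$ with $f(y)\in\varphi(y)$ for all $y$. $X$ is $Y$-selective if every l.s.c. map from $Y$ to the nonempty closed subsets of $X$ has a continuous selection; $X$ is $C$-selective if it is $Y$-selective for every countable regular space $Y$. *)

theory Defs
  imports "HOL-Analysis.Analysis"
begin

definition lsc_map :: "'b topology \<Rightarrow> 'a topology \<Rightarrow> ('b \<Rightarrow> 'a set) \<Rightarrow> bool" where
  "lsc_map Y X \<phi> \<longleftrightarrow>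
     (\<forall>y\<in>topspace Y. \<phi> y \<subseteq> topspace X \<and> \<phi> y \<noteq> {}) \<and>
     (\<forall>U. openin X U \<longrightarrow> openin Y {y \<in> topspace Y. \<phi> y \<inter> U \<noteq> {}})"

definition selective :: "'b topology \<Rightarrow> 'a topology \<Rightarrow> bool" where
  "selective Y X \<longleftrightarrow>
     (\<forall>\<phi>. lsc_map Y X \<phi> \<and> (\<forall>y\<in>topspace Y. closedin X (\<phi> y)) \<longrightarrow>
        (\<exists>f. continuous_map Y X f \<and> (\<forall>y\<in>topspace Y. f y \<in> \<phi> y)))"

text \<open>Every countable space is homeomorphic to a space whose carrier is a subset
of nat, so countable spaces are represented as topologies on nat.\<close>
definition C_selective :: "'a topology \<Rightarrow> bool" where
  "C_selective X \<longleftrightarrow>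
     (\<forall>Y :: nat topology. t1_space Y \<and> regular_space Y \<longrightarrow> selective Y X)"

end

theory Submission
  imports Defs
begin

text \<open>Near a point \<open>y\<^sub>0\<close> we select for the map that is \<open>{x\<^sub>0}\<close> at
\<open>y\<^sub>0\<close> (for some \<open>x\<^sub>0 \<in> \<phi> y\<^sub>0\<close>) and the closure of \<open>\<phi> y\<close> in \<open>X\<close> elsewhere; it is still l.s.c.
because points of \<open>Y\<close> are closed. The selection stays in \<open>U\<close> on a neighbourhood of \<open>y\<^sub>0\<close>,
and there it selects for \<open>\<phi>\<close> since \<open>\<phi> y\<close> is closed in \<open>U\<close>. A countable regular space is
zero-dimensional, so these local selections can be taken on clopen sets \<open>K\<^sub>n\<close>, and gluing
them along the disjoint clopen pieces \<open>K\<^sub>n - (K\<^sub>0 \<union> \<dots> \<union> K\<^sub>n\<^sub>-\<^sub>1)\<close> gives a global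
continuous selection.\<close>

lemma lsc_map_closure_of_subtopology:
  assumes lsc: "lsc_map Y (subtopology X U) \<phi>"
  shows "lsc_map Y X (\<lambda>y. X closure_of \<phi> y)"
proof -
  have sub: "\<forall>y\<in>topspace Y. \<phi> y \<subseteq> topspace X \<inter> U \<and> \<phi> y \<noteq> {}"
    using lsc unfolding lsc_map_def by simp
  show ?thesis
    unfolding lsc_map_def
  proof (intro conjI ballI allI impI)
    fix y assume "y \<in> topspace Y"
    then show "X closure_of \<phi> y \<subseteq> topspace X" "X closure_of \<phi> y \<noteq> {}"
      using sub closure_of_eq_empty[of "\<phi> y" X] by (auto simp: closure_of_subset_topspace)
  next
    fix V assume V: "openin X V"
    have "X closure_of \<phi> y \<inter> V \<noteq> {} \<longleftrightarrow> \<phi> y \<inter> (U \<inter> V) \<noteq> {}" if "y \<in> topspace Y" for y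
      using openin_Int_closure_of_eq_empty[OF V, of "\<phi> y"] sub that by blast
    then have "{y \<in> topspace Y. X closure_of \<phi> y \<inter> V \<noteq> {}} = {y \<in> topspace Y. \<phi> y \<inter> (U \<inter> V) \<noteq> {}}"
      by blast
    moreover have "openin Y {y \<in> topspace Y. \<phi> y \<inter> (U \<inter> V) \<noteq> {}}"
      using lsc V openin_subtopology_Int2 unfolding lsc_map_def by blast
    ultimately show "openin Y {y \<in> topspace Y. X closure_of \<phi> y \<inter> V \<noteq> {}}"
      by simp
  qed
qed

lemma lsc_map_shrink_at_point:
  assumes lsc: "lsc_map Y X \<theta>" and "t1_space Y" and "S \<subseteq> \<theta> y\<^sub>0" and "S \<noteq> {}"
  shows "lsc_map Y X (\<theta>(y\<^sub>0 := S))"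
  unfolding lsc_map_def
proof (intro conjI ballI allI impI)
  fix y assume "y \<in> topspace Y"
  then show "(\<theta>(y\<^sub>0 := S)) y \<subseteq> topspace X" "(\<theta>(y\<^sub>0 := S)) y \<noteq> {}"
    using lsc assms(3,4) unfolding lsc_map_def by auto
next
  fix V assume "openin X V"
  then have A: "openin Y {y \<in> topspace Y. \<theta> y \<inter> V \<noteq> {}}" (is "openin Y ?A")
    using lsc unfolding lsc_map_def by blast
  have "{y \<in> topspace Y. (\<theta>(y\<^sub>0 := S)) y \<inter> V \<noteq> {}} = (if S \<inter> V \<noteq> {} then ?A else ?A - {y\<^sub>0})"
    using assms(3) by auto
  moreover have "openin Y (?A - {y\<^sub>0})"
    using A \<open>t1_space Y\<close> by (simp add: t1_space_openin_delete_alt)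
  ultimately show "openin Y {y \<in> topspace Y. (\<theta>(y\<^sub>0 := S)) y \<inter> V \<noteq> {}}"
    using A by simp
qed

lemma selective_imp_local_selection_in_subtopology:
  assumes "t1_space X" and "t1_space Y" and sel: "selective Y X" and U: "openin X U"
    and lsc: "lsc_map Y (subtopology X U) \<phi>"
    and closed: "\<forall>y\<in>topspace Y. closedin (subtopology X U) (\<phi> y)"
    and y\<^sub>0: "y\<^sub>0 \<in> topspace Y"
  obtains N g where "openin Y N" "y\<^sub>0 \<in> N" "continuous_map Y X g" "\<forall>y\<in>N. g y \<in> \<phi> y"
proof -
  have sub: "\<forall>y\<in>topspace Y. \<phi> y \<subseteq> topspace X \<inter> U \<and> \<phi> y \<noteq> {}"
    using lsc unfolding lsc_map_def by simp
  then obtain x\<^sub>0 where x\<^sub>0: "x\<^sub>0 \<in> \<phi> y\<^sub>0" "x\<^sub>0 \<in> topspace X" "x\<^sub>0 \<in> U"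
    using y\<^sub>0 by blast
  define \<theta> where "\<theta> = (\<lambda>y. X closure_of \<phi> y)(y\<^sub>0 := {x\<^sub>0})"
  have "lsc_map Y X \<theta>"
    unfolding \<theta>_def
  proof (rule lsc_map_shrink_at_point[OF lsc_map_closure_of_subtopology[OF lsc] \<open>t1_space Y\<close>])
    show "{x\<^sub>0} \<subseteq> X closure_of \<phi> y\<^sub>0"
      using x\<^sub>0 sub y\<^sub>0 closure_of_subset[of "\<phi> y\<^sub>0" X] by blast
  qed simp
  moreover have "\<forall>y\<in>topspace Y. closedin X (\<theta> y)"
    using closedin_t1_singleton[OF \<open>t1_space X\<close> x\<^sub>0(2)] by (simp add: \<theta>_def)
  ultimately obtain g where g: "continuous_map Y X g" "\<forall>y\<in>topspace Y. g y \<in> \<theta> y"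
    using sel unfolding selective_def by blast
  show ?thesis
  proof
    show "openin Y {y \<in> topspace Y. g y \<in> U}"
      using openin_continuous_map_preimage[OF g(1) U] .
    show "y\<^sub>0 \<in> {y \<in> topspace Y. g y \<in> U}"
      using g(2) y\<^sub>0 x\<^sub>0 by (auto simp: \<theta>_def)
    show "\<forall>y\<in>{y \<in> topspace Y. g y \<in> U}. g y \<in> \<phi> y"
    proof
      fix y assume y: "y \<in> {y \<in> topspace Y. g y \<in> U}"
      show "g y \<in> \<phi> y"
      proof (cases "y = y\<^sub>0")
        case True
        then show ?thesis using g(2) y x\<^sub>0 by (auto simp: \<theta>_def)
      next
        case False
        have "(subtopology X U) closure_of \<phi> y = \<phi> y"
          using closed y by (simp add: closure_of_closedin)
        moreover have "\<phi> y \<subseteq> U" using sub y by blast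
        ultimately have "U \<inter> X closure_of \<phi> y = \<phi> y"
          by (metis closure_of_subtopology inf.absorb_iff2)
        moreover have "g y \<in> X closure_of \<phi> y"
          using g(2) y False by (auto simp: \<theta>_def)
        ultimately show ?thesis using y by blast
      qed
    qed
  qed (rule g(1))
qed

text \<open>Urysohn's lemma gives \<open>f : Y \<rightarrow> [0,1]\<close> separating \<open>y\<close> from the complement of \<open>N\<close>; a
value \<open>r \<in> (0,1)\<close> missed by the countable image \<open>f ` Y\<close> makes \<open>f\<^sup>-\<^sup>1[0,r)\<close> clopen.\<close>

lemma countable_regular_space_clopen_nbhd:
  assumes "countable (topspace Y)" and "t1_space Y" and "regular_space Y"
    and N: "openin Y N" and y: "y \<in> N"
  obtains K where "closedin Y K" "openin Y K" "y \<in> K" "K \<subseteq> N"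
proof -
  have "normal_space Y"
    using regular_Lindelof_imp_normal_space \<open>regular_space Y\<close> countable_imp_Lindelof_space[OF assms(1)] .
  moreover have "y \<in> topspace Y"
    using N y openin_subset by blast
  then have "closedin Y {y}"
    by (rule closedin_t1_singleton[OF \<open>t1_space Y\<close>])
  moreover have "closedin Y (topspace Y - N)"
    using N by blast
  moreover have "disjnt {y} (topspace Y - N)"
    using y by simp
  ultimately obtain f where f: "continuous_map Y (top_of_set {0..1::real}) f" "f ` {y} \<subseteq> {0}"
      "f ` (topspace Y - N) \<subseteq> {1}"
    using Urysohn_lemma[of Y "{y}" "topspace Y - N" 0 1] by auto
  have fc: "continuous_map Y euclideanreal f"
    using f(1) continuous_map_in_subtopology by blast
  have "countable (f ` topspace Y)"
    using assms(1) by blast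
  then have "\<not> {0<..<1::real} \<subseteq> f ` topspace Y"
    using uncountable_open_interval[of 0 1] countable_subset by auto
  then obtain r where r: "0 < r" "r < 1" "r \<notin> f ` topspace Y"
    by (meson greaterThanLessThan_iff subsetI)
  define K where "K = {z \<in> topspace Y. f z \<in> {..<r}}"
  have K_closed_form: "K = {z \<in> topspace Y. f z \<in> {..r}}"
    using r(3) unfolding K_def by force
  show ?thesis
  proof
    show "openin Y K" unfolding K_def
      by (rule openin_continuous_map_preimage[OF fc]) auto
    show "closedin Y K" unfolding K_closed_form
      by (rule closedin_continuous_map_preimage[OF fc]) auto
    show "y \<in> K" using f(2) N y r openin_subset unfolding K_def by fastforce
    show "K \<subseteq> N" using f(3) r unfolding K_def by force
  qed
qed

lemma continuous_map_glue_clopen_nat: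
  fixes K :: "nat \<Rightarrow> 'b set" and g :: "nat \<Rightarrow> 'b \<Rightarrow> 'a"
  assumes clopen: "\<And>n. n \<in> I \<Longrightarrow> closedin Y (K n) \<and> openin Y (K n)"
    and g: "\<And>n. n \<in> I \<Longrightarrow> continuous_map Y X (g n)"
    and cover: "topspace Y \<subseteq> (\<Union>n\<in>I. K n)"
  obtains c where "\<forall>y\<in>topspace Y. c y \<in> I \<and> y \<in> K (c y)"
    and "continuous_map Y X (\<lambda>y. g (c y) y)"
proof
  define c where "c y = (LEAST n. n \<in> I \<and> y \<in> K n)" for y
  show c: "\<forall>y\<in>topspace Y. c y \<in> I \<and> y \<in> K (c y)"
    using cover unfolding c_def by (metis (mono_tags, lifting) LeastI UN_iff subsetD)
  define C where "C n = K n - (\<Union>k\<in>{k. k < n \<and> k \<in> I}. K k)" for n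
  have C_open: "openin Y (C n)" if "n \<in> I" for n
    unfolding C_def
    by (rule openin_diff) (use clopen that in \<open>auto intro: closedin_Union\<close>)
  have C_iff: "y \<in> C n \<longleftrightarrow> c y = n" if "y \<in> topspace Y" "n \<in> I" for y n
  proof
    assume "y \<in> C n"
    then have "y \<in> K n" and not_earlier: "\<forall>k<n. k \<in> I \<longrightarrow> y \<notin> K k"
      unfolding C_def by auto
    then have "c y \<le> n"
      unfolding c_def using that(2) by (simp add: Least_le)
    moreover have "\<not> c y < n"
      using not_earlier c that(1) by blast
    ultimately show "c y = n" by simp
  next
    assume "c y = n"
    moreover have "\<not> (k \<in> I \<and> y \<in> K k)" if "k < c y" for k
      using not_less_Least that unfolding c_def by blast
    ultimately show "y \<in> C n"
      using c \<open>y \<in> topspace Y\<close> unfolding C_def by auto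
  qed
  show "continuous_map Y X (\<lambda>y. g (c y) y)"
    unfolding continuous_map_def
  proof (intro conjI allI impI)
    show "(\<lambda>y. g (c y) y) \<in> topspace Y \<rightarrow> topspace X"
      using c g continuous_map_funspace by blast
  next
    fix V assume V: "openin X V"
    have "{y \<in> topspace Y. g (c y) y \<in> V} = (\<Union>n\<in>I. C n \<inter> {y \<in> topspace Y. g n y \<in> V})"
      using C_iff c by auto
    moreover have "openin Y (\<Union>n\<in>I. C n \<inter> {y \<in> topspace Y. g n y \<in> V})"
      using C_open g openin_continuous_map_preimage[OF _ V] by blast
    ultimately show "openin Y {y \<in> topspace Y. g (c y) y \<in> V}" by simp
  qed
qed

theorem mainTheorem12:
  fixes X :: "'a topology" and U :: "'a set"
  assumes "t1_space X" and "C_selective X" and "openin X U"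
  shows "C_selective (subtopology X U)"
  unfolding C_selective_def selective_def
proof (intro allI impI)
  fix Y :: "nat topology" and \<phi>
  assume Y: "t1_space Y \<and> regular_space Y"
    and \<phi>: "lsc_map Y (subtopology X U) \<phi> \<and> (\<forall>y\<in>topspace Y. closedin (subtopology X U) (\<phi> y))"
  have sel: "selective Y X" using assms(2) Y unfolding C_selective_def by blast
  have "\<exists>K g. closedin Y K \<and> openin Y K \<and> n \<in> K \<and> continuous_map Y X g \<and> (\<forall>y\<in>K. g y \<in> \<phi> y)"
    if n: "n \<in> topspace Y" for n
  proof -
    obtain N g where "openin Y N" "n \<in> N" "continuous_map Y X g" "\<forall>y\<in>N. g y \<in> \<phi> y"
      using selective_imp_local_selection_in_subtopology[OF assms(1) _ sel assms(3) _ _ n] Y \<phi> by blast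
    moreover obtain K where "closedin Y K" "openin Y K" "n \<in> K" "K \<subseteq> N"
      using countable_regular_space_clopen_nbhd[of Y N n] Y \<open>openin Y N\<close> \<open>n \<in> N\<close> by auto
    ultimately show ?thesis by blast
  qed
  then obtain K g where Kg: "\<And>n. n \<in> topspace Y \<Longrightarrow> closedin Y (K n) \<and> openin Y (K n) \<and> n \<in> K n
       \<and> continuous_map Y X (g n) \<and> (\<forall>y\<in>K n. g n y \<in> \<phi> y)"
    by metis
  then obtain c where c: "\<forall>y\<in>topspace Y. c y \<in> topspace Y \<and> y \<in> K (c y)"
    and f: "continuous_map Y X (\<lambda>y. g (c y) y)"
    using continuous_map_glue_clopen_nat[of "topspace Y" Y K X g] by blast
  have selects: "\<forall>y\<in>topspace Y. g (c y) y \<in> \<phi> y"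
    using c Kg by blast
  moreover have "\<forall>y\<in>topspace Y. \<phi> y \<subseteq> U"
    using \<phi> unfolding lsc_map_def by auto
  ultimately have "continuous_map Y (subtopology X U) (\<lambda>y. g (c y) y)"
    using f by (auto simp: continuous_map_in_subtopology)
  with selects show "\<exists>f. continuous_map Y (subtopology X U) f \<and> (\<forall>y\<in>topspace Y. f y \<in> \<phi> y)"
    by blast
qed

end
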